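(* Let $1\le p\le2$ and let $x=(\xi_n)_{n\in\mathbb{Z}}\in\ell_p(\mathbb{Z})$. Then the closed linear span of $\{x^{(2n)}:n\in\mathbb{Z}\}$ is not equal to $\ell_p(\mathbb{Z})$.
   Context: For $x=(\xi_j)_{j\in\mathbb{Z}}$ and $n\in\mathbb{Z}$, $x^{(n)}=(\xi_{j-n})_{j\in\mathbb{Z}}$ is the shift of $x$ to the right by $n$. *)

theory Defs
  imports "HOL-Analysis.Analysis"
begin

definition lp_space :: "real \<Rightarrow> (int \<Rightarrow> complex) set" where
  "lp_space p = {x. (\<lambda>n. norm (x n) powr p) summable_on UNIV}"

definition lp_norm :: "real \<Rightarrow> (int \<Rightarrow> complex) \<Rightarrow> real" where
  "lp_norm p x = (\<Sum>\<^sub>\<infinity>n. norm (x n) powr p) powr (1 / p)"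

definition shift :: "int \<Rightarrow> (int \<Rightarrow> complex) \<Rightarrow> (int \<Rightarrow> complex)" where
  "shift n x = (\<lambda>j. x (j - n))"

definition lin_span :: "(int \<Rightarrow> complex) set \<Rightarrow> (int \<Rightarrow> complex) set" where
  "lin_span S = {z. \<exists>F c. finite F \<and> F \<subseteq> S \<and> z = (\<lambda>j. \<Sum>v\<in>F. c v * v j)}"

definition closed_span :: "real \<Rightarrow> (int \<Rightarrow> complex) set \<Rightarrow> (int \<Rightarrow> complex) set" where
  "closed_span p S = {y \<in> lp_space p. \<forall>e>0. \<exists>z\<in>lin_span S. lp_norm p (\<lambda>j. y j - z j) < e}"

end

theory Submission
  imports Defs
begin

(*
  For x in l_p, a subset of l_2, put y_i = (-1)^i x_(1-i). The involution i |-> 1 + 2n - i reverses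
  the sign of every term of sum_i y_i x_(i-2n), so y annihilates all even shifts of x under the
  bilinear pairing sum_i y_i v_i. As p <= 2 gives ||v||_2 <= ||v||_p, this pairing is continuous
  on l_p, so y annihilates the whole closed span, while it pairs nontrivially with a unit vector
  as soon as x is nonzero. For x = 0 any unit vector annihilates the (zero) shifts.
*)

lemma has_sum_sum:
  fixes f :: "'i \<Rightarrow> 'a \<Rightarrow> 'b::topological_comm_monoid_add"
  assumes "finite I" and "\<And>i. i \<in> I \<Longrightarrow> (f i has_sum s i) A"
  shows "((\<lambda>x. \<Sum>i\<in>I. f i x) has_sum (\<Sum>i\<in>I. s i)) A"
  using assms by (induction I rule: finite_induct) (auto intro: has_sum_add)

lemma lp_space_add:
  assumes "0 < p" and "u \<in> lp_space p" and "v \<in> lp_space p"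
  shows "(\<lambda>i. u i + v i) \<in> lp_space p"
proof -
  have bound: "norm (u n + v n) powr p \<le> 2 powr p * (norm (u n) powr p + norm (v n) powr p)" for n
  proof -
    have "norm (u n + v n) powr p \<le> (2 * max (norm (u n)) (norm (v n))) powr p"
      using norm_triangle_ineq[of "u n" "v n"] \<open>0 < p\<close> by (intro powr_mono2) auto
    also have "\<dots> = 2 powr p * max (norm (u n)) (norm (v n)) powr p"
      by (simp add: powr_mult)
    also have "max (norm (u n)) (norm (v n)) powr p \<le> norm (u n) powr p + norm (v n) powr p"
      by (simp add: max_def)
    finally show ?thesis by simp
  qed
  have "(\<lambda>n. 2 powr p * (norm (u n) powr p + norm (v n) powr p)) summable_on UNIV"
    using assms(2,3) unfolding lp_space_def by (intro summable_on_cmult_right summable_on_add) auto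
  then show ?thesis
    unfolding lp_space_def by (simp add: summable_on_comparison_test[OF _ bound])
qed

lemma lp_space_cmult:
  assumes "u \<in> lp_space p"
  shows "(\<lambda>i. c * u i) \<in> lp_space p"
proof -
  have "(\<lambda>n. norm c powr p * norm (u n) powr p) summable_on UNIV"
    using assms unfolding lp_space_def by (intro summable_on_cmult_right) auto
  then show ?thesis
    unfolding lp_space_def by (simp add: norm_mult powr_mult)
qed

lemma lp_space_diff:
  assumes "0 < p" and "u \<in> lp_space p" and "v \<in> lp_space p"
  shows "(\<lambda>i. u i - v i) \<in> lp_space p"
  using lp_space_add[OF assms(1,2) lp_space_cmult[OF assms(3), of "-1"]] by simp

lemma lp_space_sum:
  assumes "0 < p" and "finite F" and "\<And>v. v \<in> F \<Longrightarrow> g v \<in> lp_space p"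
  shows "(\<lambda>i. \<Sum>v\<in>F. g v i) \<in> lp_space p"
  using assms(2,3)
proof (induction F rule: finite_induct)
  case empty
  then show ?case unfolding lp_space_def using \<open>0 < p\<close> by simp
next
  case (insert a F)
  then show ?case using lp_space_add[OF \<open>0 < p\<close>] by simp
qed

lemma lin_span_subset_lp_space:
  assumes "0 < p" and "S \<subseteq> lp_space p"
  shows "lin_span S \<subseteq> lp_space p"
  using assms unfolding lin_span_def
  by (auto intro!: lp_space_sum lp_space_cmult)

lemma lp_space_shift:
  assumes "u \<in> lp_space p"
  shows "shift n u \<in> lp_space p"
proof -
  have "bij_betw (\<lambda>j. j - n) UNIV UNIV"
    by (rule bij_betw_byWitness[where f' = "\<lambda>j. j + n"]) auto
  then show ?thesis
    using assms summable_on_reindex_bij_betw[of "\<lambda>j. j - n" UNIV UNIV "\<lambda>k. norm (u k) powr p"]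
    unfolding lp_space_def shift_def by (simp add: comp_def)
qed

lemma lp_norm_nonneg: "lp_norm p u \<ge> 0"
  unfolding lp_norm_def by simp

lemma lp_norm_powr:
  assumes "0 < p"
  shows "lp_norm p u powr p = (\<Sum>\<^sub>\<infinity>n. norm (u n) powr p)"
proof -
  have "(\<Sum>\<^sub>\<infinity>n. norm (u n) powr p) \<ge> 0"
    by (rule infsum_nonneg) simp
  then show ?thesis
    using assms unfolding lp_norm_def by (simp add: powr_powr)
qed

lemma lp_norm_2_square: "lp_norm 2 u ^ 2 = (\<Sum>\<^sub>\<infinity>n. norm (u n) ^ 2)"
  using lp_norm_powr[of 2 u] lp_norm_nonneg[of 2 u] by simp

lemma norm_le_lp_norm:
  assumes "0 < p" and "u \<in> lp_space p"
  shows "norm (u i) \<le> lp_norm p u"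
proof -
  have "norm (u i) powr p \<le> (\<Sum>\<^sub>\<infinity>n. norm (u n) powr p)"
    using finite_sum_le_infsum[of "\<lambda>n. norm (u n) powr p" UNIV "{i}"] assms(2)
    unfolding lp_space_def by simp
  then have "norm (u i) powr p \<le> lp_norm p u powr p"
    using lp_norm_powr[OF assms(1)] by simp
  then have "(norm (u i) powr p) powr (1 / p) \<le> (lp_norm p u powr p) powr (1 / p)"
    by (rule powr_mono2[rotated 2]) (use assms(1) in auto)
  then show ?thesis
    using assms(1) lp_norm_nonneg[of p u] by (simp add: powr_powr)
qed

(* Interpolating between the sup bound and the l_p sum: this is where p <= 2 enters. *)
lemma norm_square_le_lp_norm_powr:
  assumes "0 < p" and "p \<le> 2" and "u \<in> lp_space p"
  shows "norm (u i) ^ 2 \<le> lp_norm p u powr (2 - p) * norm (u i) powr p"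
proof -
  have "norm (u i) ^ 2 = norm (u i) powr (2 - p) * norm (u i) powr p"
    by (simp add: powr_add[symmetric])
  also have "\<dots> \<le> lp_norm p u powr (2 - p) * norm (u i) powr p"
    using assms norm_le_lp_norm[OF assms(1,3)] by (intro mult_right_mono powr_mono2) auto
  finally show ?thesis .
qed

lemma lp_space_subset_lp_space_2:
  assumes "0 < p" and "p \<le> 2"
  shows "lp_space p \<subseteq> lp_space 2"
proof
  fix u assume u: "u \<in> lp_space p"
  have "(\<lambda>i. lp_norm p u powr (2 - p) * norm (u i) powr p) summable_on UNIV"
    using u unfolding lp_space_def by (intro summable_on_cmult_right) auto
  then have "(\<lambda>i. norm (u i) ^ 2) summable_on UNIV"
    by (rule summable_on_comparison_test) (use norm_square_le_lp_norm_powr[OF assms u] in auto)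
  then show "u \<in> lp_space 2"
    unfolding lp_space_def by simp
qed

lemma lp_norm_2_le_lp_norm:
  assumes "0 < p" and "p \<le> 2" and "u \<in> lp_space p"
  shows "lp_norm 2 u \<le> lp_norm p u"
proof -
  define N where "N = lp_norm p u"
  have N: "N \<ge> 0"
    unfolding N_def by (rule lp_norm_nonneg)
  have "lp_norm 2 u ^ 2 = (\<Sum>\<^sub>\<infinity>i. norm (u i) ^ 2)"
    by (rule lp_norm_2_square)
  also have "\<dots> \<le> (\<Sum>\<^sub>\<infinity>i. N powr (2 - p) * norm (u i) powr p)"
  proof (rule infsum_mono)
    show "(\<lambda>i. norm (u i) ^ 2) summable_on UNIV"
      using lp_space_subset_lp_space_2[OF assms(1,2)] assms(3) unfolding lp_space_def by auto
    show "(\<lambda>i. N powr (2 - p) * norm (u i) powr p) summable_on UNIV"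
      using assms(3) unfolding lp_space_def by (intro summable_on_cmult_right) auto
    show "norm (u i) ^ 2 \<le> N powr (2 - p) * norm (u i) powr p" for i
      unfolding N_def by (rule norm_square_le_lp_norm_powr[OF assms])
  qed
  also have "\<dots> = N powr (2 - p) * N powr p"
    unfolding infsum_cmult_right' N_def lp_norm_powr[OF assms(1)] ..
  also have "\<dots> = N ^ 2"
    using N by (simp add: powr_add[symmetric])
  finally show ?thesis
    using N unfolding N_def by (rule power2_le_imp_le)
qed

lemma mult_le_weighted_squares:
  fixes a b t :: real
  assumes "t > 0"
  shows "a * b \<le> (t * a ^ 2 + b ^ 2 / t) / 2"
proof -
  have "0 \<le> (t * a - b) ^ 2 / t"
    using assms by simp
  also have "\<dots> = t * a ^ 2 - 2 * (a * b) + b ^ 2 / t"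
    using assms by (simp add: field_simps power2_eq_square)
  finally show ?thesis
    by simp
qed

lemma lp_space_2_pairing:
  assumes "y \<in> lp_space 2" and "w \<in> lp_space 2" and "t > 0"
  shows "(\<lambda>i. y i * w i) summable_on UNIV"
    and "norm (\<Sum>\<^sub>\<infinity>i. y i * w i) \<le> (t * lp_norm 2 y ^ 2 + lp_norm 2 w ^ 2 / t) / 2"
proof -
  have squares: "((\<lambda>i. norm (u i) ^ 2) has_sum lp_norm 2 u ^ 2) UNIV" if "u \<in> lp_space 2" for u
    using that unfolding lp_space_def lp_norm_2_square by simp
  define B where "B = (t * lp_norm 2 y ^ 2 + lp_norm 2 w ^ 2 / t) / 2"
  have bound: "((\<lambda>i. (t * norm (y i) ^ 2 + norm (w i) ^ 2 / t) / 2) has_sum B) UNIV"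
    unfolding B_def
    by (intro has_sum_divide_const has_sum_add has_sum_cmult_right squares assms(1,2))
  have pointwise: "norm (y i * w i) \<le> (t * norm (y i) ^ 2 + norm (w i) ^ 2 / t) / 2" for i
    unfolding norm_mult by (rule mult_le_weighted_squares[OF assms(3)])
  have abs: "(\<lambda>i. norm (y i * w i)) summable_on UNIV"
    by (rule summable_on_comparison_test[OF has_sum_imp_summable[OF bound] pointwise]) simp
  then show "(\<lambda>i. y i * w i) summable_on UNIV"
    by (rule abs_summable_summable)
  have "norm (\<Sum>\<^sub>\<infinity>i. y i * w i) \<le> (\<Sum>\<^sub>\<infinity>i. norm (y i * w i))"
    by (rule norm_infsum_bound[OF abs])
  also have "\<dots> \<le> B"
    using has_sum_mono[OF has_sum_infsum[OF abs] bound pointwise] .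
  finally show "norm (\<Sum>\<^sub>\<infinity>i. y i * w i) \<le> B" .
qed

lemma lp_space_unit_vector: "(\<lambda>i. if i = j then 1 else 0) \<in> lp_space p"
proof -
  have "((\<lambda>i. norm (if i = j then 1 else 0 :: complex) powr p) has_sum 1) UNIV"
    by (rule has_sum_finite_neutralI[of "{j}"]) auto
  then show ?thesis
    unfolding lp_space_def by (auto dest: has_sum_imp_summable)
qed

definition annihilates :: "(int \<Rightarrow> complex) \<Rightarrow> (int \<Rightarrow> complex) set \<Rightarrow> bool" where
  "annihilates y S \<longleftrightarrow> (\<forall>v\<in>S. ((\<lambda>i. y i * v i) has_sum 0) UNIV)"

lemma annihilates_lin_span:
  assumes "annihilates y S"
  shows "annihilates y (lin_span S)"
  unfolding annihilates_def lin_span_def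
proof safe
  fix F c assume F: "finite F" "F \<subseteq> S"
  have "((\<lambda>i. \<Sum>v\<in>F. c v * (y i * v i)) has_sum (\<Sum>v\<in>F. c v * 0)) UNIV"
    using F assms unfolding annihilates_def by (intro has_sum_sum has_sum_cmult_right) auto
  then show "((\<lambda>i. y i * (\<lambda>j. \<Sum>v\<in>F. c v * v j) i) has_sum 0) UNIV"
    by (simp add: sum_distrib_left algebra_simps)
qed

lemma annihilates_closed_span:
  assumes "0 < p" and "p \<le> 2" and y: "y \<in> lp_space 2" and S: "S \<subseteq> lp_space p"
    and ann: "annihilates y S"
  shows "annihilates y (closed_span p S)"
  unfolding annihilates_def
proof
  fix u assume u: "u \<in> closed_span p S"
  have u2: "u \<in> lp_space 2"
    using u lp_space_subset_lp_space_2[OF assms(1,2)] by (auto simp: closed_span_def)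
  define C where "C = lp_norm 2 y ^ 2 + 1"
  have C: "C > 0"
    unfolding C_def by (simp add: add_nonneg_pos)
  have small: "norm (\<Sum>\<^sub>\<infinity>i. y i * u i) \<le> e * C / 2" if e: "e > 0" for e
  proof -
    obtain z where z: "z \<in> lin_span S" and uz: "lp_norm p (\<lambda>j. u j - z j) < e"
      using u e unfolding closed_span_def by blast
    define w where "w = (\<lambda>j. u j - z j)"
    have "z \<in> lp_space p"
      using z lin_span_subset_lp_space[OF assms(1) S] by blast
    then have w: "w \<in> lp_space p"
      using u unfolding w_def closed_span_def by (auto intro: lp_space_diff[OF assms(1)])
    have w2: "w \<in> lp_space 2"
      using w lp_space_subset_lp_space_2[OF assms(1,2)] by blast
    have "lp_norm 2 w < e"
      using lp_norm_2_le_lp_norm[OF assms(1,2) w] uz unfolding w_def by simp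
    then have "lp_norm 2 w ^ 2 / e < e"
      using e lp_norm_nonneg[of 2 w] by (simp add: divide_less_eq power2_eq_square mult_strict_mono)
    have yz: "((\<lambda>i. y i * z i) has_sum 0) UNIV"
      using annihilates_lin_span[OF ann] z unfolding annihilates_def by blast
    have yw: "(\<lambda>i. y i * w i) summable_on UNIV"
      by (rule lp_space_2_pairing(1)[OF y w2 e])
    have "(\<Sum>\<^sub>\<infinity>i. y i * u i) = (\<Sum>\<^sub>\<infinity>i. y i * w i + y i * z i)"
      unfolding w_def by (simp add: algebra_simps)
    also have "\<dots> = (\<Sum>\<^sub>\<infinity>i. y i * w i)"
      using infsum_add[OF yw has_sum_imp_summable[OF yz]] infsumI[OF yz] by simp
    finally have "norm (\<Sum>\<^sub>\<infinity>i. y i * u i) \<le> (e * lp_norm 2 y ^ 2 + lp_norm 2 w ^ 2 / e) / 2"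
      using lp_space_2_pairing(2)[OF y w2 e] by simp
    also have "\<dots> \<le> e * C / 2"
      using \<open>lp_norm 2 w ^ 2 / e < e\<close> unfolding C_def by (simp add: algebra_simps)
    finally show ?thesis .
  qed
  have "norm (\<Sum>\<^sub>\<infinity>i. y i * u i) \<le> 0"
  proof (rule field_le_epsilon)
    fix e :: real assume "e > 0"
    then show "norm (\<Sum>\<^sub>\<infinity>i. y i * u i) \<le> 0 + e"
      using small[of "2 * e / C"] C by simp
  qed
  then show "((\<lambda>i. y i * u i) has_sum 0) UNIV"
    using lp_space_2_pairing(1)[OF y u2, of 1] by (simp add: has_sum_iff)
qed

lemma closed_span_neq_lp_space_if_annihilated:
  assumes "0 < p" and "p \<le> 2" and "y \<in> lp_space 2" and "S \<subseteq> lp_space p"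
    and "annihilates y S" and "y j \<noteq> 0"
  shows "closed_span p S \<noteq> lp_space p"
proof
  assume span: "closed_span p S = lp_space p"
  define \<delta> :: "int \<Rightarrow> complex" where "\<delta> = (\<lambda>i. if i = j then 1 else 0)"
  have "\<delta> \<in> closed_span p S"
    unfolding span \<delta>_def by (rule lp_space_unit_vector)
  then have "((\<lambda>i. y i * \<delta> i) has_sum 0) UNIV"
    using annihilates_closed_span[OF assms(1-5)] unfolding annihilates_def by blast
  moreover have "((\<lambda>i. y i * \<delta> i) has_sum y j) UNIV"
    by (rule has_sum_finite_neutralI[of "{j}"]) (auto simp: \<delta>_def)
  ultimately show False
    using \<open>y j \<noteq> 0\<close> has_sum_unique by blast
qed

definition alternating_reflection :: "(int \<Rightarrow> complex) \<Rightarrow> int \<Rightarrow> complex" where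
  "alternating_reflection x i = (if even i then 1 else -1) * x (1 - i)"

lemma alternating_reflection_lp_space:
  assumes "x \<in> lp_space p"
  shows "alternating_reflection x \<in> lp_space p"
proof -
  have "bij_betw (\<lambda>i. 1 - i) UNIV (UNIV :: int set)"
    by (rule bij_betw_byWitness[where f' = "\<lambda>i. 1 - i"]) auto
  then have "(\<lambda>i. norm (x (1 - i)) powr p) summable_on UNIV"
    using assms summable_on_reindex_bij_betw[of "\<lambda>i. 1 - i" UNIV UNIV "\<lambda>k. norm (x k) powr p"]
    unfolding lp_space_def by (simp add: comp_def)
  moreover have "norm (alternating_reflection x i) = norm (x (1 - i))" for i
    by (simp add: alternating_reflection_def norm_mult)
  ultimately show ?thesis
    unfolding lp_space_def by simp
qed

lemma annihilates_even_shifts: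
  assumes "x \<in> lp_space 2"
  shows "annihilates (alternating_reflection x) {shift (2 * n) x | n. True}"
  unfolding annihilates_def
proof safe
  fix n :: int
  define f where "f = (\<lambda>i. alternating_reflection x i * shift (2 * n) x i)"
  have "f summable_on UNIV"
    unfolding f_def using assms
    by (intro lp_space_2_pairing(1)[where t = 1] alternating_reflection_lp_space lp_space_shift) auto
  have antisymmetric: "f (1 + 2 * n - i) = - f i" for i
  proof -
    have "even (1 + 2 * n - i) \<longleftrightarrow> odd i"
      by auto
    then show ?thesis
      unfolding f_def alternating_reflection_def shift_def by (auto simp: algebra_simps)
  qed
  have "bij_betw (\<lambda>i. 1 + 2 * n - i) UNIV UNIV"
    by (rule bij_betw_byWitness[where f' = "\<lambda>i. 1 + 2 * n - i"]) auto
  then have "infsum f UNIV = (\<Sum>\<^sub>\<infinity>i. f (1 + 2 * n - i))"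
    using infsum_reindex_bij_betw[of "\<lambda>i. 1 + 2 * n - i" UNIV UNIV f] by (simp add: comp_def)
  also have "\<dots> = - infsum f UNIV"
    by (simp add: antisymmetric infsum_uminus)
  finally have "infsum f UNIV = 0"
    by simp
  with \<open>f summable_on UNIV\<close>
  show "((\<lambda>i. alternating_reflection x i * shift (2 * n) x i) has_sum 0) UNIV"
    unfolding f_def by (simp add: has_sum_iff)
qed

theorem lemma3p11:
  fixes p :: real and x :: "int \<Rightarrow> complex"
  assumes "1 \<le> p" and "p \<le> 2" and "x \<in> lp_space p"
  shows "closed_span p {shift (2 * n) x | n. True} \<noteq> lp_space p"
proof -
  have p: "0 < p"
    using assms(1) by simp
  have shifts: "{shift (2 * n) x | n. True} \<subseteq> lp_space p"
    using lp_space_shift[OF assms(3)] by blast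
  show ?thesis
  proof (cases "\<exists>j. x j \<noteq> 0")
    case True
    then obtain j where "x j \<noteq> 0"
      by blast
    then have "alternating_reflection x (1 - j) \<noteq> 0"
      by (simp add: alternating_reflection_def)
    moreover have "x \<in> lp_space 2"
      using assms lp_space_subset_lp_space_2[OF p assms(2)] by blast
    ultimately show ?thesis
      using closed_span_neq_lp_space_if_annihilated[OF p assms(2) _ shifts]
        alternating_reflection_lp_space annihilates_even_shifts by blast
  next
    case False
    then have "annihilates (\<lambda>i. if i = 0 then 1 else 0) {shift (2 * n) x | n. True}"
      by (auto simp: annihilates_def shift_def)
    then show ?thesis
      using closed_span_neq_lp_space_if_annihilated[OF p assms(2) lp_space_unit_vector shifts]
      by simp
  qed
qed

end
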